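(* Let $q$ be a prime power and $n\ge2$. For $1\le d\le\lfloor n/2\rfloor$ let $\mathcal{M}_{q,d}$ be the largest size of a $d$-intersecting family in $\mathbb{G}_q(n,2d)$, and let $\mathcal{M}_q=\max_{1\le d\le\lfloor n/2\rfloor}\mathcal{M}_{q,d}$. If $\mathcal{U}\subseteq\mathbb{P}_q(n)$ is an equidistant linear code with constant distance $2d$, then $|\mathcal{U}|\le 2^{\lfloor\log_2(\mathcal{M}_{q,d}+1)\rfloor}$. In general, every equidistant linear code $\mathcal{U}\subseteq\mathbb{P}_q(n)$ satisfies $|\mathcal{U}|\le 2^{\lfloor\log_2(\mathcal{M}_q+1)\rfloor}$.
   Context: $\mathbb{P}_q(n)$ denotes the set of all subspaces of $\mathbb{F}_q^n$ and $\mathbb{G}_q(n,k)$ the set of $k$-dimensional subspaces. For subspaces $X,Y$ the subspace distance is $d_S(X,Y)=\dim X+\dim Y-2\dim(X\cap Y)$. A linear code in $\mathbb{P}_q(n)$ is a subset $\mathcal{U}\subseteq\mathbb{P}_q(n)$ with $\{0\}\in\mathcal{U}$ for which there exists a map $\boxplus:\mathcal{U}\times\mathcal{U}\to\mathcal{U}$ such that (i) $(\mathcal{U},\boxplus)$ is an abelian group; (ii) its identity element is $\{0\}$; (iii) $X\boxplus X=\{0\}$ for all $X\in\mathcal{U}$; (iv) $d_S(Y_1\boxplus X,Y_2\boxplus X)=d_S(Y_1,Y_2)$ for all $Y_1,Y_2,X\in\mathcal{U}$. It is equidistant with constant distance $r$ if $d_S(X,Y)=r$ for all distinct $X,Y\in\mathcal{U}$.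 A family $\mathcal{F}$ of subspaces is $\lambda$-intersecting if $\dim(X\cap Y)=\lambda$ for all distinct $X,Y\in\mathcal{F}$. *)

theory Defs
  imports "HOL-Analysis.Analysis"
begin

text \<open>Ambient space F_q^n is modelled as the type 'a ^ 'n with 'a a finite field
  (so q = CARD('a), a prime power) and n = CARD('n).\<close>

definition all_subspaces :: "('a::{field,finite} ^ 'n) set set" where
  "all_subspaces = {X. vec.subspace X}"

definition grass :: "nat \<Rightarrow> ('a::{field,finite} ^ 'n) set set" where
  "grass k = {X. vec.subspace X \<and> vec.dim X = k}"

definition subspace_dist :: "('a::{field,finite} ^ 'n) set \<Rightarrow> ('a ^ 'n) set \<Rightarrow> nat" where
  "subspace_dist X Y = vec.dim X + vec.dim Y - 2 * vec.dim (X \<inter> Y)"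

definition linear_code :: "('a::{field,finite} ^ 'n) set set \<Rightarrow> bool" where
  "linear_code U \<longleftrightarrow> U \<subseteq> all_subspaces \<and> {0} \<in> U \<and>
    (\<exists>f. (\<forall>X\<in>U. \<forall>Y\<in>U. f X Y \<in> U) \<and>
         (\<forall>X\<in>U. \<forall>Y\<in>U. \<forall>Z\<in>U. f (f X Y) Z = f X (f Y Z)) \<and>
         (\<forall>X\<in>U. \<forall>Y\<in>U. f X Y = f Y X) \<and>
         (\<forall>X\<in>U. f {0} X = X) \<and>
         (\<forall>X\<in>U. f X X = {0}) \<and>
         (\<forall>Y1\<in>U. \<forall>Y2\<in>U. \<forall>X\<in>U. subspace_dist (f Y1 X) (f Y2 X) = subspace_dist Y1 Y2))"

definition equidistant_with :: "('a::{field,finite} ^ 'n) set set \<Rightarrow> nat \<Rightarrow> bool" where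
  "equidistant_with U r \<longleftrightarrow> (\<forall>X\<in>U. \<forall>Y\<in>U. X \<noteq> Y \<longrightarrow> subspace_dist X Y = r)"

definition equidistant :: "('a::{field,finite} ^ 'n) set set \<Rightarrow> bool" where
  "equidistant U \<longleftrightarrow> (\<exists>r. equidistant_with U r)"

definition intersecting_family :: "nat \<Rightarrow> ('a::{field,finite} ^ 'n) set set \<Rightarrow> bool" where
  "intersecting_family lam F \<longleftrightarrow> (\<forall>X\<in>F. \<forall>Y\<in>F. X \<noteq> Y \<longrightarrow> vec.dim (X \<inter> Y) = lam)"

definition M_qd :: "'a::{field,finite} itself \<Rightarrow> 'n::finite itself \<Rightarrow> nat \<Rightarrow> nat" where
  "M_qd _ _ d = Max {card F | F :: ('a ^ 'n) set set. F \<subseteq> grass (2 * d) \<and> intersecting_family d F}"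

definition M_q :: "'a::{field,finite} itself \<Rightarrow> 'n::finite itself \<Rightarrow> nat" where
  "M_q a b = Max {M_qd a b d | d. 1 \<le> d \<and> d \<le> CARD('n) div 2}"

end

theory Submission
  imports Defs "HOL-Algebra.Sylow" "HOL-Algebra.Multiplicative_Group"
begin

(* The operation of a linear code makes it an elementary abelian 2-group (X \<boxplus> X = {0}). Its order
   is a power of two: an odd prime divisor p would, by Sylow's theorem, give a subgroup of order p,
   and any non-identity element of it would have order 2, which does not divide p.
   Since d_S({0}, X) = dim X, in a code with constant distance 2d every nonzero codeword has
   dimension 2d, and two distinct ones then meet in dimension d; so the nonzero codewords form a
   d-intersecting family in G_q(n, 2d) and |U| = 2^k \<le> M_{q,d} + 1.
   For an arbitrary equidistant code the distance is even as soon as there are two distinct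
   nonzero codewords; otherwise |U| \<le> 2 \<le> M_q + 1, as a single 2-dimensional subspace is a
   1-intersecting family. *)

lemma eq_prime_power_if_unique_prime_divisor:
  fixes n p :: nat
  assumes "n > 0" and "\<And>q. prime q \<Longrightarrow> q dvd n \<Longrightarrow> q = p"
  shows "\<exists>k. n = p ^ k"
proof (cases "n = 1")
  case True
  then show ?thesis by (intro exI[of _ 0]) simp
next
  case False
  then obtain q where "prime q" "q dvd n"
    using prime_factor_nat by blast
  with assms(2) have p: "prime p"
    by blast
  obtain y where y: "n = p ^ multiplicity p n * y" "\<not> p dvd y"
    using multiplicity_decompose'[of n p] assms(1) prime_gt_1_nat[OF p] by force
  have "y = 1"
  proof (rule ccontr)
    assume "y \<noteq> 1"
    then obtain r where "prime r" "r dvd y"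
      using prime_factor_nat by blast
    moreover from this have "r dvd n"
      using y(1) dvd_mult by metis
    ultimately show False
      using assms(2) y(2) by blast
  qed
  with y(1) show ?thesis by auto
qed

lemma (in group) order_eq_power_two_if_involutive:
  assumes fin: "finite (carrier G)" and inv: "\<And>x. x \<in> carrier G \<Longrightarrow> x \<otimes> x = \<one>"
  shows "\<exists>k. order G = 2 ^ k"
proof (rule eq_prime_power_if_unique_prime_divisor)
  show "order G > 0"
    using fin by (simp add: order_gt_0_iff_finite)
next
  fix p assume p: "prime p" "p dvd order G"
  then obtain m where "order G = p ^ 1 * m"
    by auto
  then obtain H where H: "subgroup H G" "card H = p"
    using sylow_thm[OF p(1) is_group _ fin] by fastforce
  interpret sub: group "G\<lparr>carrier := H\<rparr>"
    using H(1) is_group by (rule subgroup.subgroup_is_group)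
  have "\<not> H \<subseteq> {\<one>}"
    using H(2) prime_gt_1_nat[OF p(1)] card_mono[of "{\<one>}" H] by auto
  then obtain h where h: "h \<in> H" "h \<noteq> \<one>"
    by auto
  have "h [^]\<^bsub>G\<lparr>carrier := H\<rparr>\<^esub> (2::nat) = \<one>"
    using subgroup.mem_carrier[OF H(1) h(1)] inv by (simp add: numeral_2_eq_2)
  then have "sub.ord h dvd 2"
    using h(1) sub.pow_eq_id by simp
  moreover have "sub.ord h \<noteq> 1"
    using h sub.ord_eq_1[of h] by simp
  ultimately have "sub.ord h = 2"
    using dvd_imp_le[of "sub.ord h" 2] by (cases "sub.ord h") (auto simp: le_Suc_eq numeral_2_eq_2)
  moreover have "sub.ord h dvd p"
    using sub.ord_dvd_group_order[of h] h(1) H(2) by (simp add: order_def)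
  ultimately show "p = 2"
    using p(1) two_is_prime_nat primes_dvd_imp_eq by metis
qed

lemma linear_code_subspace: "linear_code U \<Longrightarrow> X \<in> U \<Longrightarrow> vec.subspace X"
  by (auto simp: linear_code_def all_subspaces_def)

lemma linear_code_zero: "linear_code U \<Longrightarrow> {0} \<in> U"
  by (simp add: linear_code_def)

lemma card_linear_code_eq_power_two:
  fixes U :: "('a::{field,finite} ^ 'n::finite) set set"
  assumes "linear_code U"
  shows "\<exists>k. card U = 2 ^ k"
proof -
  from assms obtain f where closed: "\<forall>X\<in>U. \<forall>Y\<in>U. f X Y \<in> U"
    and assoc: "\<forall>X\<in>U. \<forall>Y\<in>U. \<forall>Z\<in>U. f (f X Y) Z = f X (f Y Z)"
    and comm: "\<forall>X\<in>U. \<forall>Y\<in>U. f X Y = f Y X"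
    and unit: "\<forall>X\<in>U. f {0} X = X"
    and involutive: "\<forall>X\<in>U. f X X = {0}"
    unfolding linear_code_def by (elim conjE exE) (erule that; assumption)
  define G where "G = \<lparr>carrier = U, monoid.mult = f, one = {0}\<rparr>"
  have "comm_group G"
  proof (rule comm_groupI)
    fix X Y Z assume "X \<in> carrier G" "Y \<in> carrier G" "Z \<in> carrier G"
    then show "X \<otimes>\<^bsub>G\<^esub> Y \<otimes>\<^bsub>G\<^esub> Z = X \<otimes>\<^bsub>G\<^esub> (Y \<otimes>\<^bsub>G\<^esub> Z)"
      using assoc by (simp add: G_def)
  next
    fix X Y assume "X \<in> carrier G" "Y \<in> carrier G"
    then show "X \<otimes>\<^bsub>G\<^esub> Y \<in> carrier G" and "X \<otimes>\<^bsub>G\<^esub> Y = Y \<otimes>\<^bsub>G\<^esub> X"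
      using closed comm by (simp_all add: G_def)
  next
    fix X assume "X \<in> carrier G"
    then show "\<one>\<^bsub>G\<^esub> \<otimes>\<^bsub>G\<^esub> X = X"
      using unit by (simp add: G_def)
    show "\<exists>Y\<in>carrier G. Y \<otimes>\<^bsub>G\<^esub> X = \<one>\<^bsub>G\<^esub>"
      using \<open>X \<in> carrier G\<close> involutive by (intro bexI[of _ X]) (simp_all add: G_def)
  qed (simp add: G_def linear_code_zero[OF assms])
  then interpret comm_group G .
  have "\<exists>k. order G = 2 ^ k"
    by (rule order_eq_power_two_if_involutive) (simp_all add: G_def involutive)
  then show ?thesis
    by (simp add: order_def G_def)
qed

lemma subspace_dist_zero_left:
  fixes X :: "('a::{field,finite} ^ 'n::finite) set"
  assumes "vec.subspace X"
  shows "subspace_dist {0} X = vec.dim X"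
proof -
  have "{0} \<inter> X = {0}"
    using vec.subspace_0[OF assms] by auto
  then show ?thesis
    by (simp add: subspace_dist_def vec.dim_eq_0)
qed

lemma dim_eq_if_equidistant_with:
  assumes "linear_code U" "equidistant_with U r" "X \<in> U" "X \<noteq> {0}"
  shows "vec.dim X = r"
  using assms linear_code_zero subspace_dist_zero_left[OF linear_code_subspace]
  unfolding equidistant_with_def by metis

lemma subspace_dist_eq_dim_imp_dim_inter:
  fixes X Y :: "('a::{field,finite} ^ 'n::finite) set"
  assumes "vec.dim X = r" "vec.dim Y = r" "subspace_dist X Y = r"
  shows "r = 2 * vec.dim (X \<inter> Y)"
proof -
  have "vec.dim (X \<inter> Y) \<le> r"
    using vec.dim_subset[of "X \<inter> Y" X] assms(1) by auto
  then show ?thesis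
    using assms by (simp add: subspace_dist_def)
qed

lemma
  assumes "linear_code U" "equidistant_with U (2 * d)"
  shows nonzero_codewords_grass: "U - {{0}} \<subseteq> grass (2 * d)"
    and nonzero_codewords_intersecting: "intersecting_family d (U - {{0}})"
proof -
  have dim: "vec.dim X = 2 * d" if "X \<in> U - {{0}}" for X
    using that dim_eq_if_equidistant_with[OF assms] by blast
  then show "U - {{0}} \<subseteq> grass (2 * d)"
    using linear_code_subspace[OF assms(1)] by (auto simp: grass_def)
  show "intersecting_family d (U - {{0}})"
    unfolding intersecting_family_def
  proof (intro ballI impI)
    fix X Y assume XY: "X \<in> U - {{0}}" "Y \<in> U - {{0}}" "X \<noteq> Y"
    then have "subspace_dist X Y = 2 * d"
      using assms(2) unfolding equidistant_with_def by blast
    then show "vec.dim (X \<inter> Y) = d"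
      using subspace_dist_eq_dim_imp_dim_inter[OF dim[OF XY(1)] dim[OF XY(2)]] by simp
  qed
qed

lemma card_le_M_qd:
  fixes F :: "('a::{field,finite} ^ 'n::finite) set set"
  assumes "F \<subseteq> grass (2 * d)" "intersecting_family d F"
  shows "card F \<le> M_qd TYPE('a) TYPE('n) d"
  unfolding M_qd_def using assms by (intro Max_ge) auto

lemma M_qd_le_M_q:
  assumes "1 \<le> d" "d \<le> CARD('n::finite) div 2"
  shows "M_qd TYPE('a::{field,finite}) TYPE('n) d \<le> M_q TYPE('a) TYPE('n)"
proof -
  have "{M_qd TYPE('a) TYPE('n) d | d. 1 \<le> d \<and> d \<le> CARD('n) div 2}
      = M_qd TYPE('a) TYPE('n) ` {1..CARD('n) div 2}"
    by auto
  then show ?thesis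
    unfolding M_q_def using assms by (intro Max_ge) auto
qed

lemma card_equidistant_linear_code_le_M_qd:
  fixes U :: "('a::{field,finite} ^ 'n::finite) set set"
  assumes "linear_code U" "equidistant_with U (2 * d)"
  shows "card U \<le> M_qd TYPE('a) TYPE('n) d + 1"
proof -
  have "card (U - {{0}}) \<le> M_qd TYPE('a) TYPE('n) d"
    using nonzero_codewords_grass[OF assms] nonzero_codewords_intersecting[OF assms]
    by (rule card_le_M_qd)
  moreover have "card (U - {{0}}) = card U - 1"
    using linear_code_zero[OF assms(1)] by simp
  ultimately show ?thesis
    by linarith
qed

lemma grass_nonempty:
  assumes "k \<le> CARD('n::finite)"
  shows "grass k \<noteq> ({} :: ('a::{field,finite} ^ 'n) set set)"
proof -
  have "card (cart_basis :: ('a ^ 'n) set) = CARD('n)"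
    using vec.dim_UNIV[where 'a='a and 'b='n] vec_dim_card[where 'a='a and 'n='n] by simp
  then obtain B :: "('a ^ 'n) set" where B: "B \<subseteq> cart_basis" "card B = k"
    using assms by (metis obtain_subset_with_card_n)
  have "vec.independent B"
    using independent_cart_basis B(1) by (rule vec.independent_mono)
  then have "vec.span B \<in> grass k"
    unfolding grass_def using vec.subspace_span vec.dim_span_eq_card_independent B(2) by auto
  then show ?thesis
    by blast
qed

lemma one_le_M_q:
  assumes "CARD('n::finite) \<ge> 2"
  shows "1 \<le> M_q TYPE('a::{field,finite}) TYPE('n)"
proof -
  obtain W :: "('a ^ 'n) set" where "W \<in> grass 2"
    using grass_nonempty[OF assms] by blast
  then have "card {W} \<le> M_qd TYPE('a) TYPE('n) 1"
    by (intro card_le_M_qd) (auto simp: intersecting_family_def)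
  also have "\<dots> \<le> M_q TYPE('a) TYPE('n)"
    using assms by (intro M_qd_le_M_q) auto
  finally show ?thesis
    by simp
qed

lemma equidistant_with_even:
  fixes U :: "('a::{field,finite} ^ 'n::finite) set set"
  assumes "linear_code U" "equidistant_with U r"
    and "X \<in> U" "Y \<in> U" "X \<noteq> {0}" "Y \<noteq> {0}" "X \<noteq> Y"
  obtains d where "r = 2 * d" "1 \<le> d" "d \<le> CARD('n) div 2"
proof -
  have dim: "vec.dim X = r" "vec.dim Y = r"
    using dim_eq_if_equidistant_with[OF assms(1,2)] assms(3-6) by auto
  define d where "d = vec.dim (X \<inter> Y)"
  have r: "r = 2 * d"
    unfolding d_def using assms(2-4,7) dim
    by (intro subspace_dist_eq_dim_imp_dim_inter) (auto simp: equidistant_with_def)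
  moreover have "1 \<le> d"
    using vec.dim_eq_0[of X] vec.subspace_0[OF linear_code_subspace[OF assms(1,3)]] assms(5) dim r
    by auto
  moreover have "d \<le> CARD('n) div 2"
    using vec.dim_subset[of X UNIV] vec_dim_card[where 'a='a and 'n='n] dim r by simp
  ultimately show ?thesis
    using that by blast
qed

lemma card_equidistant_linear_code_le_M_q:
  fixes U :: "('a::{field,finite} ^ 'n::finite) set set"
  assumes "CARD('n) \<ge> 2" "linear_code U" "equidistant U"
  shows "card U \<le> M_q TYPE('a) TYPE('n) + 1"
proof (cases "\<exists>X\<in>U - {{0}}. \<exists>Y\<in>U - {{0}}. X \<noteq> Y")
  case True
  then obtain X Y where XY: "X \<in> U" "Y \<in> U" "X \<noteq> {0}" "Y \<noteq> {0}" "X \<noteq> Y"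
    by blast
  obtain r where r: "equidistant_with U r"
    using assms(3) by (auto simp: equidistant_def)
  obtain d where d: "r = 2 * d" "1 \<le> d" "d \<le> CARD('n) div 2"
    using equidistant_with_even[OF assms(2) r XY] .
  have "card U \<le> M_qd TYPE('a) TYPE('n) d + 1"
    using card_equidistant_linear_code_le_M_qd assms(2) r d(1) by blast
  also have "\<dots> \<le> M_q TYPE('a) TYPE('n) + 1"
    using M_qd_le_M_q d(2,3) by simp
  finally show ?thesis .
next
  case False
  then have "card (U - {{0}}) \<le> 1"
    using card_le_Suc0_iff_eq[of "U - {{0}}"] by auto
  then have "card U \<le> 2"
    using card_Diff1_le[of U "{0}"] card_Diff_singleton[OF linear_code_zero[OF assms(2)]] by linarith
  then show ?thesis
    using one_le_M_q[OF assms(1), where 'a='a] by linarith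
qed

lemma power_two_le_floor_log:
  fixes k m :: nat
  assumes "2 ^ k \<le> m"
  shows "(2::nat) ^ k \<le> 2 ^ nat \<lfloor>log 2 (real m)\<rfloor>"
proof -
  have "real k \<le> log 2 (real m)"
    using assms by (rule le_log2_of_power)
  then have "k \<le> nat \<lfloor>log 2 (real m)\<rfloor>"
    by linarith
  then show ?thesis
    by (rule power_increasing) simp
qed

lemma card_linear_code_le_floor_log:
  fixes U :: "('a::{field,finite} ^ 'n::finite) set set"
  assumes "linear_code U" "card U \<le> M + 1"
  shows "card U \<le> 2 ^ nat \<lfloor>log 2 (real (M + 1))\<rfloor>"
  using card_linear_code_eq_power_two[OF assms(1)] power_two_le_floor_log assms(2) by metis

theorem corollary2:
  assumes "CARD('n::finite) \<ge> 2"
  shows "(\<forall>(U :: ('a::{field,finite} ^ 'n) set set) d.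
            1 \<le> d \<and> d \<le> CARD('n) div 2 \<and> linear_code U \<and> equidistant_with U (2 * d) \<longrightarrow>
            card U \<le> 2 ^ nat \<lfloor>log 2 (real (M_qd TYPE('a) TYPE('n) d + 1))\<rfloor>)
       \<and> (\<forall>(U :: ('a ^ 'n) set set). linear_code U \<and> equidistant U \<longrightarrow>
            card U \<le> 2 ^ nat \<lfloor>log 2 (real (M_q TYPE('a) TYPE('n) + 1))\<rfloor>)"
proof -
  have "card U \<le> 2 ^ nat \<lfloor>log 2 (real (M_qd TYPE('a) TYPE('n) d + 1))\<rfloor>"
    if "linear_code U" "equidistant_with U (2 * d)" for U :: "('a ^ 'n) set set" and d
    using that by (intro card_linear_code_le_floor_log card_equidistant_linear_code_le_M_qd)
  moreover have "card U \<le> 2 ^ nat \<lfloor>log 2 (real (M_q TYPE('a) TYPE('n) + 1))\<rfloor>"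
    if "linear_code U" "equidistant U" for U :: "('a ^ 'n) set set"
    using that by (intro card_linear_code_le_floor_log card_equidistant_linear_code_le_M_q[OF assms])
  ultimately show ?thesis
    by blast
qed

end
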